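(* Let $n\ge1$, $m\ge0$, $a,b>0$, $I_{m,n,s}(x)=\int_s^x(1+t)^nt^m\,dt$, $\mu_s=\frac{(1+a)^na^mb+nI_{m,n-1,s}(a)}{I_{m,n,s}(a)}$ and $\tilde\psi_s(x)=\frac{\mu_sI_{m,n,s}(x)-nI_{m,n-1,s}(x)}{(1+x)^nx^m}$. Assume $\mu_0\le n$ and let $\lambda\in[0,a)$ be the unique solution of $\mu_\lambda(1+\lambda)=n$. Then $\tilde\psi_\lambda$ is convex on $(0,\infty)$. In particular, for all $x\in[\lambda,a]$, $\frac{b}{a}x\ge\tilde\psi_\lambda(x)$. *)

theory Defs
  imports "HOL-Analysis.Analysis"
begin

definition Iint :: "nat \<Rightarrow> nat \<Rightarrow> real \<Rightarrow> real \<Rightarrow> real" where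
  "Iint m n s x =
     (if s \<le> x then integral {s..x} (\<lambda>t. (1 + t) ^ n * t ^ m)
      else - integral {x..s} (\<lambda>t. (1 + t) ^ n * t ^ m))"

definition mu_s :: "nat \<Rightarrow> nat \<Rightarrow> real \<Rightarrow> real \<Rightarrow> real \<Rightarrow> real" where
  "mu_s m n a b s =
     ((1 + a) ^ n * a ^ m * b + real n * Iint m (n - 1) s a) / Iint m n s a"

definition psi_tilde :: "nat \<Rightarrow> nat \<Rightarrow> real \<Rightarrow> real \<Rightarrow> real \<Rightarrow> real \<Rightarrow> real" where
  "psi_tilde m n a b s x =
     (mu_s m n a b s * Iint m n s x - real n * Iint m (n - 1) s x) / ((1 + x) ^ n * x ^ m)"

end

theory Submission
  imports Defs
begin

text \<open>Write \<open>c = mu_l\<close> and \<open>N = c I_{m,n,l} - n I_{m,n-1,l}\<close>, so that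
  \<open>psi = N / ((1 + x)^n x^m)\<close>, \<open>N(l) = 0\<close> and, by the choice of \<open>l\<close>,
  \<open>N'(x) = c (1 + x)^(n-1) x^m (x - l)\<close>. Differentiating twice gives
  \<open>x^2 (1 + x)^2 psi'' = P psi + c x R\<close> for explicit polynomials \<open>P\<close> and \<open>R\<close>, so convexity
  reduces to \<open>P N + c (1 + x)^n x^(m+1) R \<ge> 0\<close>. Left of \<open>l\<close> every factor is nonnegative;
  right of \<open>l\<close> the quotient of this expression by \<open>P\<close> starts at a nonnegative value and is
  nondecreasing, because the numerator of its derivative has nonnegative coefficients in
  \<open>x - l\<close>, \<open>l\<close>, \<open>n - 1\<close> and \<open>m\<close> (for \<open>m = 0\<close> the quotient is even constant).
  Since \<open>psi(l) = 0\<close> and \<open>psi(a) = b\<close>, convexity puts \<open>psi\<close> below the chord from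
  \<open>(l, 0)\<close> to \<open>(a, b)\<close>, hence below the line \<open>b x / a\<close>; when \<open>l = 0\<close> the missing
  endpoint is replaced by the bound \<open>psi(y) \<le> c y^2\<close> near \<open>0\<close>.\<close>

definition binom_antideriv :: "nat \<Rightarrow> nat \<Rightarrow> real \<Rightarrow> real" where
  "binom_antideriv m j x = (\<Sum>i\<le>j. real (j choose i) * x ^ (i + m + 1) / real (i + m + 1))"

lemma has_real_derivative_binom_antideriv:
  "(binom_antideriv m j has_real_derivative (1 + x) ^ j * x ^ m) (at x)"
proof -
  have "(binom_antideriv m j has_real_derivative (\<Sum>i\<le>j. real (j choose i) * x ^ (i + m))) (at x)"
    unfolding binom_antideriv_def[abs_def]
  proof (rule DERIV_sum)
    fix i
    show "((\<lambda>x. real (j choose i) * x ^ (i + m + 1) / real (i + m + 1)) has_real_derivative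
        real (j choose i) * x ^ (i + m)) (at x)"
      by (rule derivative_eq_intros refl | simp)+
  qed
  moreover have "(\<Sum>i\<le>j. real (j choose i) * x ^ (i + m)) = (\<Sum>i\<le>j. real (j choose i) * x ^ i) * x ^ m"
    by (simp add: sum_distrib_right power_add mult.assoc)
  moreover have "\<dots> = (x + 1) ^ j * x ^ m"
    by (simp add: binomial_ring)
  ultimately show ?thesis
    by (simp add: add.commute)
qed

lemma Iint_eq_binom_antideriv: "Iint m j s x = binom_antideriv m j x - binom_antideriv m j s"
proof -
  have "integral {u..v} (\<lambda>t. (1 + t) ^ j * t ^ m) = binom_antideriv m j v - binom_antideriv m j u"
    if "u \<le> v" for u v
    using that
    by (intro integral_unique fundamental_theorem_of_calculus)
      (auto intro: has_real_derivative_iff_has_vector_derivative[THEN iffD1,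
        OF DERIV_subset[OF has_real_derivative_binom_antideriv]])
  then show ?thesis
    unfolding Iint_def by auto
qed

lemma Iint_self [simp]: "Iint m j s s = 0"
  by (simp add: Iint_eq_binom_antideriv)

lemma has_real_derivative_Iint: "(Iint m j s has_real_derivative (1 + x) ^ j * x ^ m) (at x)"
  unfolding Iint_eq_binom_antideriv[abs_def]
  by (auto intro!: derivative_eq_intros has_real_derivative_binom_antideriv)

lemma has_real_derivative_binom_weight:
  fixes x :: real
  assumes "0 < x"
  shows "((\<lambda>x. (1 + x) ^ n * x ^ m) has_real_derivative
           (1 + x) ^ n * x ^ m * (real n / (1 + x) + real m / x)) (at x)"
proof -
  have n: "real n * (1 + x) ^ (n - 1) = (1 + x) ^ n * real n / (1 + x)"
    using assms by (cases n) auto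
  have m: "real m * x ^ (m - 1) = x ^ m * real m / x"
    using assms by (cases m) auto
  have eq: "real n * (1 + x) ^ (n - 1) * x ^ m + (1 + x) ^ n * (real m * x ^ (m - 1))
      = (1 + x) ^ n * x ^ m * (real n / (1 + x) + real m / x)"
    unfolding n m using assms by (simp add: field_simps)
  have "((\<lambda>x. (1 + x) ^ n * x ^ m) has_real_derivative
      real n * (1 + x) ^ (n - 1) * x ^ m + (1 + x) ^ n * (real m * x ^ (m - 1))) (at x)"
    by (auto intro!: derivative_eq_intros)
  then show ?thesis
    by (simp only: eq)
qed

lemma convex_on_le_line_through_origin:
  fixes f :: "real \<Rightarrow> real"
  assumes "convex_on {l..a} f" "0 \<le> l" "x \<in> {l..a}" "f l \<le> 0" "0 \<le> f a"
  shows "f x \<le> f a / a * x"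
proof (cases "l = a")
  case True
  then show ?thesis using assms by auto
next
  case False
  with assms(3) have "0 < a - l" by auto
  define t where "t = (x - l) / (a - l)"
  have "0 \<le> t" "t \<le> 1"
    using assms(3) \<open>0 < a - l\<close> by (auto simp: t_def field_simps)
  have "l * x \<le> l * a"
    using assms(2,3) by (simp add: mult_left_mono)
  then have "t \<le> x / a"
    using assms(2,3) \<open>0 < a - l\<close> by (simp add: t_def field_simps)
  have "t * (a - l) = x - l"
    using \<open>0 < a - l\<close> by (simp add: t_def)
  then have "(1 - t) *\<^sub>R l + t *\<^sub>R a = x"
    by (simp add: algebra_simps)
  then have "f x \<le> (1 - t) * f l + t * f a"
    using convex_onD_Icc[OF assms(1) _ \<open>0 \<le> t\<close> \<open>t \<le> 1\<close>] \<open>0 < a - l\<close> by simp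
  also have "\<dots> \<le> x / a * f a"
    using \<open>0 \<le> t\<close> \<open>t \<le> 1\<close> \<open>t \<le> x / a\<close> assms(4,5)
    by (smt (verit) mult_nonneg_nonpos mult_right_mono)
  finally show ?thesis by (simp add: ac_simps)
qed

lemma convex_on_le_line_through_origin_at_right:
  fixes f g :: "real \<Rightarrow> real"
  assumes "convex_on {0<..a} f" "0 < x" "x \<le> a"
    and "\<forall>\<^sub>F y in at_right 0. f y \<le> g y" "(g \<longlongrightarrow> 0) (at_right 0)"
  shows "f x \<le> f a / a * x"
proof -
  have "\<forall>\<^sub>F y in at_right 0. f x \<le> (g y - f a) / (a - y) * (a - x) + f a"
    using assms(4) eventually_at_right_real[OF \<open>0 < x\<close>]
  proof eventually_elim
    case (elim y)
    then have "f x \<le> (f y - f a) / (a - y) * (a - x) + f a"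
      using assms(3) by (intro convex_onD_Icc'' convex_on_subset[OF assms(1)]) auto
    also have "\<dots> \<le> (g y - f a) / (a - y) * (a - x) + f a"
      using elim assms(3) by (intro add_right_mono mult_right_mono divide_right_mono) auto
    finally show ?case .
  qed
  moreover have "((\<lambda>y. (g y - f a) / (a - y) * (a - x) + f a) \<longlongrightarrow> (0 - f a) / (a - 0) * (a - x) + f a)
      (at_right 0)"
    using assms(2,3) by (intro tendsto_intros assms(5)) auto
  ultimately have "f x \<le> (0 - f a) / (a - 0) * (a - x) + f a"
    by (intro tendsto_le[OF trivial_limit_at_right_real _ tendsto_const])
  then show ?thesis
    using assms(2,3) by (simp add: field_simps)
qed

text \<open>\<open>P_poly\<close> and \<open>R_poly\<close> are the polynomials in
  \<open>x^2 (1 + x)^2 psi'' = P_poly psi + c x R_poly\<close> (lemma \<open>psi''_eq\<close> below).\<close>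

definition P_poly :: "real \<Rightarrow> real \<Rightarrow> real \<Rightarrow> real" where
  "P_poly n m x = (n * x + m * (1 + x)) ^ 2 + n * x ^ 2 + m * (1 + x) ^ 2"

definition R_poly :: "real \<Rightarrow> real \<Rightarrow> real \<Rightarrow> real \<Rightarrow> real" where
  "R_poly n m l x = (1 + l) * x - (n * x + m * (1 + x)) * (x - l)"

lemma has_real_derivative_P_poly:
  "(P_poly n m has_real_derivative
     2 * (n + m) * (n * x + m * (1 + x)) + 2 * n * x + 2 * m * (1 + x)) (at x)"
  unfolding P_poly_def[abs_def]
  by (auto intro!: derivative_eq_intros simp: algebra_simps power2_eq_square)

lemma has_real_derivative_R_poly:
  "(R_poly n m l has_real_derivative (1 + l) - (n + m) * (x - l) - ((n + m) * x + m)) (at x)"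
  unfolding R_poly_def[abs_def]
  by (auto intro!: derivative_eq_intros simp: algebra_simps)

lemma P_poly_pos:
  fixes n m y :: real
  assumes "0 \<le> n" "0 < m" "0 \<le> y"
  shows "0 < P_poly n m y"
proof -
  have "m * (1 + y) ^ 2 \<le> P_poly n m y"
    using assms by (simp add: P_poly_def)
  moreover have "0 < m * (1 + y) ^ 2"
    using assms by simp
  ultimately show ?thesis
    by linarith
qed

text \<open>Up to the positive factor \<open>c (1 + x)^(n-1) x^m / P_poly^2\<close>, this is the derivative of
  \<open>N + c (1 + x)^n x^(m+1) R_poly / P_poly\<close> (lemma \<open>has_real_derivative_Phi\<close> below).\<close>

definition Phi_deriv_numer :: "real \<Rightarrow> real \<Rightarrow> real \<Rightarrow> real \<Rightarrow> real" where
  "Phi_deriv_numer n m l x = P_poly n m x ^ 2 * (x - l)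
    + P_poly n m x * ((n * x + (m + 1) * (1 + x)) * R_poly n m l x
                     + x * (1 + x) * ((1 + l) - (n + m) * (x - l) - ((n + m) * x + m)))
    - (2 * (n + m) * (n * x + m * (1 + x)) + 2 * n * x + 2 * m * (1 + x)) * x * (1 + x) * R_poly n m l x"

lemma Phi_deriv_numer_nonneg:
  fixes n m l x :: real
  assumes "1 \<le> n" "0 \<le> m" "0 \<le> l" "l \<le> x"
  shows "0 \<le> Phi_deriv_numer n m l x"
proof -
  define d K where "d = x - l" and "K = n - 1"
  then have x: "x = l + d" and n: "n = 1 + K" and "0 \<le> d" "0 \<le> K"
    using assms by auto
  \<comment> \<open>In the variables \<open>d = x - l\<close>, \<open>l\<close>, \<open>K = n - 1\<close>, \<open>m\<close> all coefficients are nonnegative.\<close>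
  have "Phi_deriv_numer n m l x = 2 * m * (l + l*m + 4*l^2 + 3*l^2*m + l^2*K + 5*l^3 + 3*l^3*m + 2*l^3*K
      + 2*l^4 + l^4*m + l^4*K + d + d*m + 6*d*l + 5*d*l*m + d*l*K + 11*d*l^2 + 7*d*l^2*m
      + 4*d*l^2*K + 6*d*l^3 + 3*d*l^3*m + 3*d*l^3*K + 2*d^2 + 2*d^2*m + 7*d^2*l + 5*d^2*l*m
      + 2*d^2*l*K + 6*d^2*l^2 + 3*d^2*l^2*m + 3*d^2*l^2*K + d^3 + d^3*m + 2*d^3*l + d^3*l*m
      + d^3*l*K)"
    unfolding Phi_deriv_numer_def P_poly_def R_poly_def x n by algebra
  then show ?thesis
    using assms(2,3) \<open>0 \<le> d\<close> \<open>0 \<le> K\<close> by simp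
qed

locale psi_setup =
  fixes m n :: nat and c l :: real
  assumes n_ge_1: "1 \<le> n" and l_nonneg: "0 \<le> l" and c_balance: "c * (1 + l) = real n"
begin

definition N :: "real \<Rightarrow> real" where
  "N x = c * Iint m n l x - real n * Iint m (n - 1) l x"

definition psi :: "real \<Rightarrow> real" where
  "psi x = N x / ((1 + x) ^ n * x ^ m)"

definition psi' :: "real \<Rightarrow> real" where
  "psi' x = c * (x - l) / (1 + x) - (real n / (1 + x) + real m / x) * psi x"

definition psi'' :: "real \<Rightarrow> real" where
  "psi'' x = c * (1 + l) / (1 + x) ^ 2 + (real n / (1 + x) ^ 2 + real m / x ^ 2) * psi x
     - (real n / (1 + x) + real m / x) * psi' x"

lemma c_pos: "0 < c"
proof -
  have "0 < c * (1 + l)"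
    using c_balance n_ge_1 by simp
  with l_nonneg show ?thesis
    by (simp add: zero_less_mult_iff)
qed

lemma N_at_l [simp]: "N l = 0"
  by (simp add: N_def)

lemma has_real_derivative_N: "(N has_real_derivative c * (1 + x) ^ (n - 1) * x ^ m * (x - l)) (at x)"
proof -
  have "c * (1 + x) ^ n * x ^ m - real n * (1 + x) ^ (n - 1) * x ^ m
      = c * (1 + x) ^ (n - 1) * x ^ m * (x - l)"
    using n_ge_1 c_balance[symmetric] by (cases n) (simp_all add: algebra_simps)
  then show ?thesis
    unfolding N_def[abs_def]
    by (auto intro!: derivative_eq_intros has_real_derivative_Iint simp: algebra_simps)
qed

lemma has_real_derivative_psi:
  assumes "0 < x"
  shows "(psi has_real_derivative psi' x) (at x)"
proof -
  define g where "g = (1 + x) ^ n * x ^ m"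
  define h where "h = real n / (1 + x) + real m / x"
  define A where "A = c * (x - l) / (1 + x)"
  have "g \<noteq> 0"
    using assms by (simp add: g_def)
  have "c * (1 + x) ^ (n - 1) * x ^ m * (x - l) = g * A"
    using assms n_ge_1 by (cases n) (auto simp: g_def A_def)
  then have "(N has_real_derivative g * A) (at x)"
    by (metis has_real_derivative_N)
  then have "(psi has_real_derivative (g * A * g - N x * (g * h)) / (g * g)) (at x)"
    unfolding psi_def[abs_def] g_def h_def
    by (rule DERIV_divide[OF _ has_real_derivative_binom_weight[OF assms]]) (use assms in simp)
  moreover have "N x = g * psi x"
    using \<open>g \<noteq> 0\<close> by (simp add: psi_def g_def)
  then have "(g * A * g - N x * (g * h)) / (g * g) = psi' x"
    using \<open>g \<noteq> 0\<close> by (simp add: psi'_def flip: A_def h_def) (simp add: field_simps)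
  ultimately show ?thesis
    by metis
qed

lemma has_real_derivative_psi':
  assumes "0 < x"
  shows "(psi' has_real_derivative psi'' x) (at x)"
proof -
  have "((\<lambda>x. c * (x - l) / (1 + x)) has_real_derivative c * (1 + l) / (1 + x) ^ 2) (at x)"
    using assms by (auto intro!: derivative_eq_intros simp: field_simps power2_eq_square)
  moreover have "((\<lambda>x. real n / (1 + x) + real m / x) has_real_derivative
      - (real n / (1 + x) ^ 2 + real m / x ^ 2)) (at x)"
    using assms by (auto intro!: derivative_eq_intros simp: field_simps power2_eq_square)
  ultimately have "((\<lambda>x. c * (x - l) / (1 + x) - (real n / (1 + x) + real m / x) * psi x)
      has_real_derivative c * (1 + l) / (1 + x) ^ 2
        - (- (real n / (1 + x) ^ 2 + real m / x ^ 2) * psi x + psi' x * (real n / (1 + x) + real m / x)))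
      (at x)"
    by (intro DERIV_diff DERIV_mult has_real_derivative_psi assms)
  then show ?thesis
    by (simp add: psi'_def[abs_def] psi''_def algebra_simps)
qed

definition psi''_numer :: "real \<Rightarrow> real" where
  "psi''_numer x = P_poly n m x * N x + c * ((1 + x) ^ n * x ^ m) * x * R_poly n m l x"

lemma psi''_eq:
  assumes "0 < x"
  shows "psi'' x = psi''_numer x / (x ^ 2 * (1 + x) ^ 2 * ((1 + x) ^ n * x ^ m))"
proof -
  define g where "g = (1 + x) ^ n * x ^ m"
  have "g \<noteq> 0"
    using assms by (simp add: g_def)
  have "psi'' x * (x ^ 2 * (1 + x) ^ 2) = P_poly n m x * psi x + c * x * R_poly n m l x"
  proof -
    define y where "y = 1 + x"
    have "x \<noteq> 0" "y \<noteq> 0"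
      using assms by (auto simp: y_def)
    have "psi'' x = c * (1 + l) / y ^ 2 + (real n / y ^ 2 + real m / x ^ 2) * psi x
        - (real n / y + real m / x) * (c * (x - l) / y - (real n / y + real m / x) * psi x)"
      by (simp add: psi''_def psi'_def y_def)
    also have "\<dots> * (x ^ 2 * y ^ 2) = ((real n * x + real m * y) ^ 2 + real n * x ^ 2 + real m * y ^ 2) * psi x
        + c * x * ((1 + l) * x - (real n * x + real m * y) * (x - l))"
      using \<open>x \<noteq> 0\<close> \<open>y \<noteq> 0\<close> by (simp add: field_simps power2_eq_square)
    finally show ?thesis
      by (simp add: P_poly_def R_poly_def y_def)
  qed
  also have "\<dots> = psi''_numer x / g"
    using \<open>g \<noteq> 0\<close> by (simp add: psi''_numer_def psi_def g_def field_simps)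
  finally show ?thesis
    using assms by (simp add: g_def field_simps)
qed

lemma psi''_numer_nonneg_below:
  assumes "0 < x" "x \<le> l"
  shows "0 \<le> psi''_numer x"
proof -
  have "N l \<le> N x"
  proof (rule DERIV_nonpos_imp_nonincreasing[OF assms(2)])
    fix y assume "x \<le> y" "y \<le> l"
    then have "c * (1 + y) ^ (n - 1) * y ^ m * (y - l) \<le> 0"
      using assms(1) c_pos by (intro mult_nonneg_nonpos) auto
    then show "\<exists>z. (N has_real_derivative z) (at y) \<and> z \<le> 0"
      using has_real_derivative_N by blast
  qed
  moreover have "R_poly n m l x = (1 + l) * x + (real n * x + real m * (1 + x)) * (l - x)"
    by (simp add: R_poly_def algebra_simps)
  then have "0 \<le> R_poly n m l x"
    using assms l_nonneg by simp
  ultimately show ?thesis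
    using assms(1) c_pos by (simp add: psi''_numer_def P_poly_def)
qed

lemma psi''_numer_nonneg_m0:
  assumes "m = 0"
  shows "0 \<le> psi''_numer x"
proof -
  define Phi0 where "Phi0 y = real n * (real n + 1) * N y + c * (1 + y) ^ n * (1 + l - real n * (y - l))"
    for y
  have "(Phi0 has_real_derivative 0) (at y)" for y
  proof -
    have "(1 + y) ^ n = (1 + y) * (1 + y) ^ (n - 1)"
      using n_ge_1 by (cases n) auto
    then show ?thesis
      unfolding Phi0_def[abs_def] using assms
      by (auto intro!: derivative_eq_intros has_real_derivative_N[unfolded assms] simp: algebra_simps)
  qed
  then have "Phi0 x = Phi0 l"
    by (intro DERIV_isconst_all) auto
  also have "\<dots> = c * (1 + l) ^ n * (1 + l)"
    by (simp add: Phi0_def)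
  finally have "0 \<le> Phi0 x"
    using c_pos l_nonneg by simp
  moreover have "psi''_numer x = x ^ 2 * Phi0 x"
    unfolding psi''_numer_def P_poly_def R_poly_def Phi0_def
    using assms by (simp add: algebra_simps power2_eq_square)
  ultimately show ?thesis
    by simp
qed

definition Phi :: "real \<Rightarrow> real" where
  "Phi y = N y + c * ((1 + y) ^ n * y ^ Suc m) * R_poly n m l y / P_poly n m y"

lemma has_real_derivative_Phi:
  assumes "0 < m" "0 \<le> y"
  shows "(Phi has_real_derivative
           c * (1 + y) ^ (n - 1) * y ^ m * Phi_deriv_numer n m l y / P_poly n m y ^ 2) (at y)"
proof -
  define P R where "P = P_poly n m" and "R = R_poly n m l"
  define P' where "P' = 2 * (real n + real m) * (real n * y + real m * (1 + y))
    + 2 * real n * y + 2 * real m * (1 + y)"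
  define R' where "R' = (1 + l) - (real n + real m) * (y - l) - ((real n + real m) * y + real m)"
  define p q where "p = (1 + y) ^ (n - 1)" and "q = y ^ m"
  define A where "A y = (1 + y) ^ n * y ^ Suc m" for y :: real
  have "P y \<noteq> 0"
    using P_poly_pos[of "real n" "real m" y] assms by (simp add: P_def)
  have A_eq: "A y = p * q * (y * (1 + y))" and pow_n: "(1 + y) ^ n = (1 + y) * p"
    using n_ge_1 by (cases n; simp add: A_def p_def q_def)+
  have "(A has_real_derivative
      real n * (1 + y) ^ (n - 1) * y ^ Suc m + real (Suc m) * y ^ m * (1 + y) ^ n) (at y)"
    unfolding A_def[abs_def] using DERIV_pow[of "Suc m" y]
    by (intro DERIV_mult) (auto intro!: derivative_eq_intros)
  then have "(A has_real_derivative p * q * (real n * y + (real m + 1) * (1 + y))) (at y)"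
    by (simp add: pow_n p_def q_def algebra_simps)
  moreover have "(P has_real_derivative P') (at y)" "(R has_real_derivative R') (at y)"
    unfolding P_def P'_def R_def R'_def by (rule has_real_derivative_P_poly has_real_derivative_R_poly)+
  ultimately have "(Phi has_real_derivative c * p * q * (y - l)
      + ((c * (p * q * (real n * y + (real m + 1) * (1 + y))) * R y + R' * (c * A y)) * P y
         - c * A y * R y * P') / (P y * P y)) (at y)"
    unfolding Phi_def[abs_def] p_def q_def A_def[symmetric] P_def[symmetric] R_def[symmetric]
    using \<open>P y \<noteq> 0\<close> by (intro DERIV_add has_real_derivative_N DERIV_divide DERIV_mult DERIV_cmult)
  moreover have "c * p * q * (y - l)
      + ((c * (p * q * (real n * y + (real m + 1) * (1 + y))) * R y + R' * (c * A y)) * P y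
         - c * A y * R y * P') / (P y * P y)
    = c * p * q * Phi_deriv_numer n m l y / P y ^ 2"
    using \<open>P y \<noteq> 0\<close> unfolding A_eq Phi_deriv_numer_def P_def[symmetric] R_def[symmetric] P'_def R'_def
    by (simp add: field_simps power2_eq_square)
  ultimately show ?thesis
    by (simp add: p_def q_def P_def)
qed

lemma psi''_numer_nonneg_above:
  assumes "0 < m" "l \<le> x"
  shows "0 \<le> psi''_numer x"
proof -
  have P_pos: "0 < P_poly n m y" if "0 \<le> y" for y
    using P_poly_pos[of "real n" "real m" y] assms(1) that by simp
  have "Phi l \<le> Phi x"
  proof (rule DERIV_nonneg_imp_nondecreasing[OF assms(2)])
    fix y assume "l \<le> y" "y \<le> x"
    then have "0 \<le> c * (1 + y) ^ (n - 1) * y ^ m * Phi_deriv_numer n m l y / P_poly n m y ^ 2"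
      using Phi_deriv_numer_nonneg[of n m l y] n_ge_1 l_nonneg c_pos by simp
    moreover have "0 \<le> y"
      using \<open>l \<le> y\<close> l_nonneg by simp
    ultimately show "\<exists>z. (Phi has_real_derivative z) (at y) \<and> 0 \<le> z"
      using has_real_derivative_Phi[OF assms(1)] by blast
  qed
  moreover have "0 \<le> Phi l"
    using P_pos[OF l_nonneg] l_nonneg c_pos
    by (auto simp: Phi_def R_poly_def intro!: divide_nonneg_pos)
  moreover have "psi''_numer x = P_poly n m x * Phi x"
    using P_pos[of x] assms(2) l_nonneg by (simp add: psi''_numer_def Phi_def field_simps)
  ultimately show ?thesis
    using P_pos[of x] assms(2) l_nonneg by simp
qed

lemma psi''_numer_nonneg:
  assumes "0 < x"
  shows "0 \<le> psi''_numer x"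
  using psi''_numer_nonneg_m0 psi''_numer_nonneg_below[OF assms] psi''_numer_nonneg_above
  by (cases "m = 0"; cases "x \<le> l") auto

lemma convex_on_psi: "convex_on {0<..} psi"
proof (rule f''_ge0_imp_convex)
  fix x :: real
  assume "x \<in> {0<..}"
  then have "0 < x"
    by simp
  show "(psi has_real_derivative psi' x) (at x)" "(psi' has_real_derivative psi'' x) (at x)"
    using \<open>0 < x\<close> by (rule has_real_derivative_psi, rule has_real_derivative_psi')
  show "0 \<le> psi'' x"
    using psi''_eq[OF \<open>0 < x\<close>] psi''_numer_nonneg[OF \<open>0 < x\<close>] \<open>0 < x\<close> by simp
qed simp

lemma psi_le_quadratic:
  assumes "l = 0" "0 < y"
  shows "psi y \<le> c * y ^ 2"
proof -
  define K where "K = c * (1 + y) ^ (n - 1) * y ^ m"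
  have "K * 0 ^ 2 - N 0 \<le> K * y ^ 2 - N y"
  proof (rule DERIV_nonneg_imp_nondecreasing[of 0 y "\<lambda>z. K * z ^ 2 - N z"])
    fix z assume "0 \<le> z" "z \<le> y"
    then have "c * (1 + z) ^ (n - 1) * z ^ m * z \<le> K * z"
      unfolding K_def using c_pos
      by (intro mult_right_mono mult_left_mono mult_mono power_mono) auto
    also have "\<dots> \<le> 2 * K * z"
      using \<open>0 \<le> z\<close> c_pos assms(2) by (simp add: K_def)
    finally have "0 \<le> 2 * K * z - c * (1 + z) ^ (n - 1) * z ^ m * (z - l)"
      using assms(1) by simp
    moreover have "((\<lambda>z. K * z ^ 2 - N z) has_real_derivative
        2 * K * z - c * (1 + z) ^ (n - 1) * z ^ m * (z - l)) (at z)"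
      by (auto intro!: derivative_eq_intros has_real_derivative_N)
    ultimately show "\<exists>D. ((\<lambda>z. K * z ^ 2 - N z) has_real_derivative D) (at z) \<and> 0 \<le> D"
      by blast
  qed (use assms in simp)
  then have "N y \<le> K * y ^ 2"
    using N_at_l assms(1) by simp
  then have "psi y \<le> K * y ^ 2 / ((1 + y) ^ n * y ^ m)"
    unfolding psi_def using assms(2) by (simp add: divide_right_mono)
  also have "\<dots> = c * y ^ 2 / (1 + y)"
    using n_ge_1 assms(2) by (cases n) (simp_all add: K_def)
  also have "\<dots> \<le> c * y ^ 2"
    using c_pos assms(2) by (simp add: divide_le_eq)
  finally show ?thesis .
qed

lemma psi_at_l [simp]: "psi l = 0"
  by (simp add: psi_def)

lemma psi_le_line_through_origin:
  assumes "0 \<le> psi a" "x \<in> {l..a}"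
  shows "psi x \<le> psi a / a * x"
proof (cases "l = 0")
  case False
  then have "convex_on {l..a} psi"
    using l_nonneg by (intro convex_on_subset[OF convex_on_psi]) auto
  then show ?thesis
    using convex_on_le_line_through_origin[of l a psi x] l_nonneg assms by simp
next
  case True
  show ?thesis
  proof (cases "x = 0")
    case True
    then show ?thesis
      using \<open>l = 0\<close> psi_at_l by simp
  next
    case False
    with assms(2) \<open>l = 0\<close> have "0 < x" "x \<le> a"
      by auto
    have "\<forall>\<^sub>F y in at_right 0. psi y \<le> c * y ^ 2"
      using eventually_at_right_less by (rule eventually_mono) (rule psi_le_quadratic[OF \<open>l = 0\<close>])
    moreover have "((\<lambda>y. c * y ^ 2) \<longlongrightarrow> 0) (at_right 0)"
      by (rule tendsto_eq_intros refl | simp)+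
    moreover have "convex_on {0<..a} psi"
      by (rule convex_on_subset[OF convex_on_psi]) auto
    ultimately show ?thesis
      using \<open>0 < x\<close> \<open>x \<le> a\<close> by (intro convex_on_le_line_through_origin_at_right)
  qed
qed

end

theorem lemma3p8:
  fixes n m :: nat and a b l :: real
  assumes "n \<ge> 1" and "a > 0" and "b > 0"
    and "mu_s m n a b 0 \<le> real n"
    and "l \<in> {0..<a}" and "mu_s m n a b l * (1 + l) = real n"
    and "\<forall>l'\<in>{0..<a}. mu_s m n a b l' * (1 + l') = real n \<longrightarrow> l' = l"
  shows "convex_on {0<..} (psi_tilde m n a b l)
         \<and> (\<forall>x\<in>{l..a}. b / a * x \<ge> psi_tilde m n a b l x)"
proof -
  \<comment> \<open>The hypotheses on \<open>mu_s m n a b 0\<close> and on the uniqueness of \<open>l\<close> only serve to single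
    out \<open>l\<close>; the argument needs nothing but the balance equation at \<open>l\<close>.\<close>
  interpret psi_setup m n "mu_s m n a b l" l
    using assms(1,5,6) by unfold_locales auto
  have psi_tilde: "psi_tilde m n a b l = psi"
    by (simp add: fun_eq_iff psi_tilde_def psi_def N_def)
  have "Iint m n l a \<noteq> 0"
    using c_pos by (auto simp: mu_s_def)
  then have "mu_s m n a b l * Iint m n l a = (1 + a) ^ n * a ^ m * b + real n * Iint m (n - 1) l a"
    by (simp add: mu_s_def)
  then have "psi a = b"
    unfolding psi_def N_def using assms(2) by simp
  then have "psi x \<le> b / a * x" if "x \<in> {l..a}" for x
    using psi_le_line_through_origin[OF _ that] assms(3) by simp
  then show ?thesis
    using convex_on_psi by (simp add: psi_tilde)
qed

end
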